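(* Let $\mathcal{P}=\{P_1,\ldots,P_n\}$ and let $\mathcal{F}\subseteq 2^{\mathcal{P}}$ be a fail-prone system. Consider the ideal $I=\langle \xi_{\mathcal{F}_{\bar X}},\ \xi_{\mathcal{F}_{\bar Y}},\ \xi_{\mathcal{F}_{\bar T}},\ \omega\rangle\subseteq\mathbb{B}(\bar X,\bar Y,\bar T)$ and let $\mathcal{G}$ be a Gröbner basis for $I$. If $|SM(\mathcal{G})|=|\varphi(\mathcal{F})|^3$, then $\mathcal{F}$ satisfies the $Q^3$-condition, i.e. $\mathcal{P}\not\subseteq F_1\cup F_2\cup F_3$ for all $F_1,F_2,F_3\in\mathcal{F}$.
   Context: $\mathbb{B}=\mathbb{F}_2$; $\mathbb{B}(\bar X,\bar Y,\bar T)$ is the Boolean polynomial ring $\mathbb{B}[X_1,\ldots,X_n,Y_1,\ldots,Y_n,T_1,\ldots,T_n]$ modulo $\langle X_i^2-X_i,Y_i^2-Y_i,T_i^2-T_i\rangle$. $\varphi:2^{\mathcal{P}}\to\mathbb{B}^n$ sends a set to its indicator vector, $\varphi(\mathcal{F})=\{\varphi(F):F\in\mathcal{F}\}$. For $S\subseteq\mathcal{P}$, $\xi_S(\bar Z)=\prod_{i=1}^n(1+Z_i+\varphi(S)_i)$; for $\mathcal{A}\subseteq 2^{\mathcal{P}}$, $\xi_{\mathcal{A}_{\bar Z}}=\prod_{A\in\mathcal{A}}(\xi_A(\bar Z)+1)$. $\omega(\bar X,\bar Y,\bar T)=\prod_{i=1}^n(X_iY_iT_i+X_iY_i+X_iT_i+Y_iT_i+X_i+Y_i+T_i)$.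 A fail-prone system is a collection of subsets of $\mathcal{P}$ none of which is contained in another. Monomial order: lexicographic with block order $\bar T<\bar Y<\bar X$ and within blocks $X_n\prec\cdots\prec X_1$ etc. A Gröbner basis of $I$ is a generating set $\mathcal{G}$ such that every nonzero $f\in I$ has leading monomial divisible by that of some $g\in\mathcal{G}$; $SM(\mathcal{G})$ is the set of multilinear monomials not in the ideal generated by the leading monomials of elements of $I$. *)

theory Defs
  imports Main
begin

datatype var = X nat | Y nat | T nat

(* Multilinear monomials = finite sets of variables; elements of the Boolean
   polynomial ring B(X,Y,T) = F2[X,Y,T]/<Z^2 - Z> are represented by their unique
   multilinear normal form, i.e. the finite set of monomials with coefficient 1. *)
type_synonym mono = "var set"
type_synonym bpoly = "mono set"

definition vars :: "nat \<Rightarrow> var set" where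
  "vars n = X ` {1..n} \<union> Y ` {1..n} \<union> T ` {1..n}"

definition mmonos :: "nat \<Rightarrow> mono set" where
  "mmonos n = Pow (vars n)"

definition bring :: "nat \<Rightarrow> bpoly set" where
  "bring n = {p. finite p \<and> p \<subseteq> mmonos n}"

definition bzero :: bpoly where "bzero = {}"
definition bone :: bpoly where "bone = {{}}"
definition bconst :: "bool \<Rightarrow> bpoly" where "bconst b = (if b then bone else bzero)"
definition bvar :: "var \<Rightarrow> bpoly" where "bvar v = {{v}}"

definition badd :: "bpoly \<Rightarrow> bpoly \<Rightarrow> bpoly" where
  "badd p q = (p - q) \<union> (q - p)"

(* multiplication, using Z_i^2 = Z_i (monomial product = union) and coefficients mod 2 *)
definition bmult :: "bpoly \<Rightarrow> bpoly \<Rightarrow> bpoly" where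
  "bmult p q = {m. odd (card {(a, b). a \<in> p \<and> b \<in> q \<and> a \<union> b = m})}"

definition bprod_idx :: "nat \<Rightarrow> (nat \<Rightarrow> bpoly) \<Rightarrow> bpoly" where
  "bprod_idx n f = foldr (\<lambda>i acc. bmult (f i) acc) [1..<Suc n] bone"

(* product over a finite set (the ring is commutative) *)
definition bprod_set :: "('a \<Rightarrow> bpoly) \<Rightarrow> 'a set \<Rightarrow> bpoly" where
  "bprod_set f A = Finite_Set.fold (\<lambda>a acc. bmult (f a) acc) bone A"

inductive_set ideal_gen :: "nat \<Rightarrow> bpoly set \<Rightarrow> bpoly set" for n S where
  zero: "bzero \<in> ideal_gen n S"
| gen: "s \<in> S \<Longrightarrow> s \<in> ideal_gen n S"
| add: "a \<in> ideal_gen n S \<Longrightarrow> b \<in> ideal_gen n S \<Longrightarrow> badd a b \<in> ideal_gen n S"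
| mult: "r \<in> bring n \<Longrightarrow> a \<in> ideal_gen n S \<Longrightarrow> bmult r a \<in> ideal_gen n S"

(* P = {P_1..P_n} is identified with {1..n}; phi sends a set to its indicator vector *)
definition phi :: "nat \<Rightarrow> nat set \<Rightarrow> bool list" where
  "phi n S = map (\<lambda>i. i \<in> S) [1..<Suc n]"

definition fail_prone :: "nat \<Rightarrow> nat set set \<Rightarrow> bool" where
  "fail_prone n F \<longleftrightarrow> F \<subseteq> Pow {1..n} \<and> (\<forall>A\<in>F. \<forall>B\<in>F. A \<subseteq> B \<longrightarrow> A = B)"

(* xi_S(Z) = prod_{i=1}^n (1 + Z_i + phi(S)_i); Z selects the block X, Y or T *)
definition xi :: "nat \<Rightarrow> (nat \<Rightarrow> var) \<Rightarrow> nat set \<Rightarrow> bpoly" where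
  "xi n Z S = bprod_idx n (\<lambda>i. badd (badd bone (bvar (Z i))) (bconst (phi n S ! (i - 1))))"

definition xi_fam :: "nat \<Rightarrow> (nat \<Rightarrow> var) \<Rightarrow> nat set set \<Rightarrow> bpoly" where
  "xi_fam n Z A = bprod_set (\<lambda>S. badd (xi n Z S) bone) A"

definition omega :: "nat \<Rightarrow> bpoly" where
  "omega n = bprod_idx n (\<lambda>i.
     let x = bvar (X i); y = bvar (Y i); t = bvar (T i) in
     badd (bmult (bmult x y) t) (badd (bmult x y) (badd (bmult x t) (badd (bmult y t)
       (badd x (badd y t))))))"

definition ideal_I :: "nat \<Rightarrow> nat set set \<Rightarrow> bpoly set" where
  "ideal_I n F = ideal_gen n {xi_fam n X F, xi_fam n Y F, xi_fam n T F, omega n}"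

(* monomial order: lex, T < Y < X, within blocks X_n < ... < X_1.
   rank: smaller rank = larger variable *)
fun rank :: "nat \<Rightarrow> var \<Rightarrow> nat" where
  "rank n (X i) = i"
| "rank n (Y i) = n + i"
| "rank n (T i) = 2 * n + i"

definition mono_less :: "nat \<Rightarrow> mono \<Rightarrow> mono \<Rightarrow> bool" where
  "mono_less n a b \<longleftrightarrow>
     (\<exists>v\<in>b - a. \<forall>w\<in>vars n. rank n w < rank n v \<longrightarrow> (w \<in> a \<longleftrightarrow> w \<in> b))"

definition lm :: "nat \<Rightarrow> bpoly \<Rightarrow> mono" where
  "lm n p = (THE m. m \<in> p \<and> (\<forall>m'\<in>p. m' \<noteq> m \<longrightarrow> mono_less n m' m))"

definition groebner_basis :: "nat \<Rightarrow> bpoly set \<Rightarrow> bpoly set \<Rightarrow> bool" where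
  "groebner_basis n I G \<longleftrightarrow> G \<subseteq> bring n \<and> ideal_gen n G = I \<and>
     (\<forall>f\<in>I. f \<noteq> bzero \<longrightarrow> (\<exists>g\<in>G. g \<noteq> bzero \<and> lm n g \<subseteq> lm n f))"

definition SM :: "nat \<Rightarrow> bpoly set \<Rightarrow> mono set" where
  "SM n I = {m \<in> mmonos n. {m} \<notin> ideal_gen n {{lm n f} | f. f \<in> I \<and> f \<noteq> bzero}}"

definition Q3 :: "nat \<Rightarrow> nat set set \<Rightarrow> bool" where
  "Q3 n F \<longleftrightarrow> (\<forall>F1\<in>F. \<forall>F2\<in>F. \<forall>F3\<in>F. \<not> {1..n} \<subseteq> F1 \<union> F2 \<union> F3)"

end

theory Submission
  imports Defs
begin

text \<open>Read elements of \<open>\<bbbB>(X, Y, T)\<close> as Boolean functions on \<open>\<bbbB>\<^sup>3\<^sup>n\<close>. By the Boolean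
Nullstellensatz, a polynomial vanishing on the variety \<open>V\<close> of \<open>I\<close> lies in \<open>I\<close>; since no nonzero
combination of standard monomials lies in \<open>I\<close>, subsets of \<open>SM(\<G>)\<close> give pairwise distinct
functions on \<open>V\<close>, whence \<open>|SM(\<G>)| \<le> |V|\<close>. A point of \<open>V\<close> has its \<open>X\<close>-, \<open>Y\<close>- and \<open>T\<close>-blocks in
\<open>\<phi>(\<F>)\<close>, and since \<open>\<omega>\<close> vanishes there, some index is \<open>0\<close> in all three blocks. So if
\<open>F\<^sub>1 \<union> F\<^sub>2 \<union> F\<^sub>3 = \<P>\<close>, the point \<open>(\<phi>(F\<^sub>1), \<phi>(F\<^sub>2), \<phi>(F\<^sub>3))\<close> is missing from \<open>V \<subseteq> \<phi>(\<F>)\<^sup>3\<close> and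
\<open>|SM(\<G>)| < |\<phi>(\<F>)|\<^sup>3\<close>.\<close>

subsection \<open>Evaluation at points\<close>

text \<open>A point of \<open>\<bbbB>\<^sup>3\<^sup>n\<close> is encoded by the set \<open>a\<close> of variables that are \<open>1\<close> there; a monomial
evaluates to \<open>1\<close> at \<open>a\<close> iff it is contained in \<open>a\<close>.\<close>

definition beval :: "bpoly \<Rightarrow> var set \<Rightarrow> bool" where
  "beval p a \<longleftrightarrow> odd (card {m \<in> p. m \<subseteq> a})"

lemma bmult_subset_unions: "bmult p q \<subseteq> (\<lambda>(u, v). u \<union> v) ` (p \<times> q)"
proof
  fix m assume "m \<in> bmult p q"
  then have "{(u, v). u \<in> p \<and> v \<in> q \<and> u \<union> v = m} \<noteq> {}"
    unfolding bmult_def by (metis (no_types, lifting) card.empty even_zero mem_Collect_eq)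
  then show "m \<in> (\<lambda>(u, v). u \<union> v) ` (p \<times> q)"
    by force
qed

lemma finite_badd [simp]: "finite p \<Longrightarrow> finite q \<Longrightarrow> finite (badd p q)"
  unfolding badd_def by auto

lemma finite_bmult [simp]: "finite p \<Longrightarrow> finite q \<Longrightarrow> finite (bmult p q)"
  using bmult_subset_unions finite_subset by blast

lemma finite_bconsts [simp]: "finite bone" "finite bzero" "finite (bvar v)" "finite (bconst b)"
  unfolding bone_def bzero_def bvar_def bconst_def by auto

lemma beval_consts [simp]:
  "beval bone a" "\<not> beval bzero a" "beval (bconst b) a \<longleftrightarrow> b" "beval (bvar v) a \<longleftrightarrow> v \<in> a"
  unfolding beval_def bone_def bzero_def bconst_def bvar_def by (auto simp: Collect_conv_if)

lemma odd_card_sym_diff: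
  assumes "finite A" "finite B"
  shows "odd (card (sym_diff A B)) \<longleftrightarrow> odd (card A) \<noteq> odd (card B)"
proof -
  have "card (sym_diff A B) = card (A - B) + card (B - A)"
    by (rule card_Un_disjoint) (use assms in auto)
  moreover have "card A = card (A \<inter> B) + card (A - B)" "card B = card (A \<inter> B) + card (B - A)"
    using card_Int_Diff[OF assms(1), of B] card_Int_Diff[OF assms(2), of A] by (simp_all add: Int_commute)
  ultimately show ?thesis by presburger
qed

lemma beval_badd:
  assumes "finite p" "finite q"
  shows "beval (badd p q) a \<longleftrightarrow> beval p a \<noteq> beval q a"
proof -
  have "{m \<in> badd p q. m \<subseteq> a} = sym_diff {m \<in> p. m \<subseteq> a} {m \<in> q. m \<subseteq> a}"
    unfolding badd_def by auto
  then show ?thesis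
    unfolding beval_def using odd_card_sym_diff[of "{m \<in> p. m \<subseteq> a}" "{m \<in> q. m \<subseteq> a}"] assms
    by simp
qed

lemma beval_bmult:
  assumes "finite p" "finite q"
  shows "beval (bmult p q) a \<longleftrightarrow> beval p a \<and> beval q a"
proof -
  let ?U = "\<lambda>(u, v). u \<union> v :: mono"
  define c where "c m = card {x \<in> p \<times> q. ?U x = m}" for m
  define M where "M = {m \<in> ?U ` (p \<times> q). m \<subseteq> a}"
  have "finite M"
    using assms unfolding M_def by simp
  have "bmult p q = {m. odd (c m)}"
    unfolding bmult_def c_def by (intro Collect_cong arg_cong[where f = "\<lambda>x. odd (card x)"]) auto
  then have "{m \<in> bmult p q. m \<subseteq> a} = {m \<in> M. odd (c m)}"
    using bmult_subset_unions[of p q] unfolding M_def by auto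
  moreover have "sum c M = card ({u \<in> p. u \<subseteq> a} \<times> {v \<in> q. v \<subseteq> a})"
  proof -
    have "{u \<in> p. u \<subseteq> a} \<times> {v \<in> q. v \<subseteq> a} = (\<Union>m\<in>M. {x \<in> p \<times> q. ?U x = m})"
      unfolding M_def by auto
    moreover have "card (\<Union>m\<in>M. {x \<in> p \<times> q. ?U x = m}) = sum c M"
      unfolding c_def by (rule card_UN_disjoint) (use \<open>finite M\<close> assms in auto)
    ultimately show ?thesis by simp
  qed
  ultimately have "odd (card {m \<in> bmult p q. m \<subseteq> a}) \<longleftrightarrow>
      odd (card {u \<in> p. u \<subseteq> a} * card {v \<in> q. v \<subseteq> a})"
    using even_sum_iff[OF \<open>finite M\<close>, of c] by (simp add: card_cartesian_product)
  then show ?thesis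
    unfolding beval_def by simp
qed

lemma bring_finite: "p \<in> bring n \<Longrightarrow> finite p"
  unfolding bring_def by simp

lemma vars_mem [simp]:
  "X i \<in> vars n \<longleftrightarrow> i \<in> {1..n}" "Y i \<in> vars n \<longleftrightarrow> i \<in> {1..n}" "T i \<in> vars n \<longleftrightarrow> i \<in> {1..n}"
  unfolding vars_def by auto

lemma bring_closed [simp]:
  "bone \<in> bring n" "bzero \<in> bring n" "bconst b \<in> bring n"
  "v \<in> vars n \<Longrightarrow> bvar v \<in> bring n"
  "p \<in> bring n \<Longrightarrow> q \<in> bring n \<Longrightarrow> badd p q \<in> bring n"
  "p \<in> bring n \<Longrightarrow> q \<in> bring n \<Longrightarrow> bmult p q \<in> bring n"
proof -
  assume "p \<in> bring n" "q \<in> bring n"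
  then have "(\<lambda>(u, v). u \<union> v) ` (p \<times> q) \<subseteq> mmonos n" "finite p" "finite q"
    unfolding bring_def mmonos_def by auto
  then show "bmult p q \<in> bring n"
    using bmult_subset_unions[of p q] unfolding bring_def by auto
qed (auto simp: bring_def badd_def bone_def bzero_def bconst_def bvar_def mmonos_def)

lemma bring_beval_foldr_bmult:
  assumes "\<And>i. i \<in> set xs \<Longrightarrow> f i \<in> bring n"
  shows "foldr (\<lambda>i. bmult (f i)) xs bone \<in> bring n \<and>
    (beval (foldr (\<lambda>i. bmult (f i)) xs bone) a \<longleftrightarrow> (\<forall>i\<in>set xs. beval (f i) a))"
  using assms
proof (induction xs)
  case (Cons x xs)
  then have "finite (f x)" "finite (foldr (\<lambda>i. bmult (f i)) xs bone)"
    using bring_finite by auto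
  with Cons show ?case
    by (simp add: beval_bmult)
qed simp

lemma bring_beval_bprod_idx:
  assumes "\<And>i. i \<in> {1..n} \<Longrightarrow> f i \<in> bring n"
  shows "bprod_idx n f \<in> bring n"
    and "beval (bprod_idx n f) a \<longleftrightarrow> (\<forall>i\<in>{1..n}. beval (f i) a)"
  using bring_beval_foldr_bmult[of "[1..<Suc n]" f n a] assms unfolding bprod_idx_def
  by (simp_all add: atLeastLessThanSuc_atLeastAtMost del: upt_Suc)

lemma bpoly_nonzero_point:
  assumes "p \<in> bring n" "p \<noteq> bzero"
  obtains a where "a \<subseteq> vars n" "beval p a"
proof -
  have "finite p" "p \<noteq> {}"
    using assms bring_finite unfolding bzero_def by auto
  then obtain m where m: "m \<in> p" "\<forall>m'\<in>p. m' \<subseteq> m \<longrightarrow> m = m'"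
    using finite_has_minimal by blast
  then have "{m' \<in> p. m' \<subseteq> m} = {m}"
    by auto
  then have "beval p m"
    unfolding beval_def by simp
  moreover have "m \<subseteq> vars n"
    using m(1) assms(1) unfolding bring_def mmonos_def by auto
  ultimately show thesis
    using that by blast
qed

lemma bpoly_eqI:
  assumes "p \<in> bring n" "q \<in> bring n" "\<And>a. a \<subseteq> vars n \<Longrightarrow> beval p a \<longleftrightarrow> beval q a"
  shows "p = q"
proof -
  have "badd p q = bzero"
  proof (rule ccontr)
    assume "badd p q \<noteq> bzero"
    moreover have "badd p q \<in> bring n"
      using assms(1,2) by simp
    ultimately obtain a where "a \<subseteq> vars n" "beval (badd p q) a"
      using bpoly_nonzero_point by blast
    moreover have "finite p" "finite q"
      using assms(1,2) by (simp_all add: bring_finite)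
    ultimately show False
      using assms(3) by (simp add: beval_badd)
  qed
  then show ?thesis
    unfolding badd_def bzero_def by auto
qed

subsection \<open>The Boolean Nullstellensatz\<close>

definition variety :: "nat \<Rightarrow> bpoly set \<Rightarrow> var set set" where
  "variety n S = {a. a \<subseteq> vars n \<and> (\<forall>s\<in>S. \<not> beval s a)}"

lemma ideal_gen_subset_bring: "S \<subseteq> bring n \<Longrightarrow> ideal_gen n S \<subseteq> bring n"
proof
  fix p assume "p \<in> ideal_gen n S" "S \<subseteq> bring n"
  then show "p \<in> bring n"
    by (induction p rule: ideal_gen.induct) auto
qed

lemma ideal_gen_disjunction:
  assumes "finite S" "S \<subseteq> bring n"
  obtains h where "h \<in> ideal_gen n S" "\<And>a. beval h a \<longleftrightarrow> (\<exists>s\<in>S. beval s a)"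
proof -
  have "\<exists>h\<in>ideal_gen n S. \<forall>a. beval h a \<longleftrightarrow> (\<exists>s\<in>S'. beval s a)" if "S' \<subseteq> S" for S'
    using finite_subset[OF that assms(1)] that
  proof (induction S' rule: finite_induct)
    case empty
    show ?case
      by (auto intro!: bexI[of _ bzero] ideal_gen.zero)
  next
    case (insert g S')
    then obtain h where h: "h \<in> ideal_gen n S" "\<forall>a. beval h a \<longleftrightarrow> (\<exists>s\<in>S'. beval s a)"
      by blast
    have "g \<in> ideal_gen n S" "g \<in> bring n" "h \<in> bring n"
      using insert.prems assms(2) ideal_gen_subset_bring h(1) by (auto intro: ideal_gen.gen)
    then have "badd g (bmult (badd bone g) h) \<in> ideal_gen n S"
      by (intro ideal_gen.add ideal_gen.mult h(1)) simp_all
    moreover have "beval (badd g (bmult (badd bone g) h)) a \<longleftrightarrow> (\<exists>s\<in>insert g S'. beval s a)" for a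
      using h(2) \<open>g \<in> bring n\<close> \<open>h \<in> bring n\<close> by (auto simp: beval_badd beval_bmult bring_finite)
    ultimately show ?case
      by blast
  qed
  then show thesis
    using that by blast
qed

theorem boolean_nullstellensatz:
  assumes "finite S" "S \<subseteq> bring n" "p \<in> bring n"
    and "\<And>a. a \<in> variety n S \<Longrightarrow> \<not> beval p a"
  shows "p \<in> ideal_gen n S"
proof -
  obtain h where h: "h \<in> ideal_gen n S" "\<And>a. beval h a \<longleftrightarrow> (\<exists>s\<in>S. beval s a)"
    using ideal_gen_disjunction[OF assms(1,2)] by blast
  have "h \<in> bring n"
    using h(1) ideal_gen_subset_bring assms(2) by blast
  have "beval p a \<longleftrightarrow> beval (bmult p h) a" if "a \<subseteq> vars n" for a
  proof -
    have "beval p a \<Longrightarrow> beval h a"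
      using assms(4) that h(2) unfolding variety_def by blast
    then show ?thesis
      using bring_finite[OF assms(3)] bring_finite[OF \<open>h \<in> bring n\<close>] by (auto simp: beval_bmult)
  qed
  then have "p = bmult p h"
    using assms(3) \<open>h \<in> bring n\<close> by (intro bpoly_eqI[of _ n]) simp_all
  moreover have "bmult p h \<in> ideal_gen n S"
    by (rule ideal_gen.mult) (use assms(3) h(1) in auto)
  ultimately show ?thesis
    by simp
qed

lemma mono_less_irrefl: "\<not> mono_less n a a"
  unfolding mono_less_def by simp

lemma mono_less_trans:
  assumes "b \<subseteq> vars n" "c \<subseteq> vars n" "mono_less n a b" "mono_less n b c"
  shows "mono_less n a c"
proof -
  obtain v where v: "v \<in> b - a" "\<forall>w\<in>vars n. rank n w < rank n v \<longrightarrow> (w \<in> a \<longleftrightarrow> w \<in> b)"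
    using assms(3) unfolding mono_less_def by blast
  obtain u where u: "u \<in> c - b" "\<forall>w\<in>vars n. rank n w < rank n u \<longrightarrow> (w \<in> b \<longleftrightarrow> w \<in> c)"
    using assms(4) unfolding mono_less_def by blast
  have "v \<in> vars n" "u \<in> vars n"
    using u v assms(1,2) by auto
  have "rank n v \<noteq> rank n u"
    using u v \<open>v \<in> vars n\<close> \<open>u \<in> vars n\<close> unfolding vars_def by auto
  then consider "rank n v < rank n u" | "rank n u < rank n v"
    by linarith
  then show ?thesis
  proof cases
    case 1
    with u v \<open>v \<in> vars n\<close> show ?thesis
      unfolding mono_less_def by (intro bexI[of _ v]) auto
  next
    case 2
    with u v \<open>u \<in> vars n\<close> show ?thesis
      unfolding mono_less_def by (intro bexI[of _ u]) auto
  qed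
qed

lemma mono_less_total:
  assumes "a \<noteq> b"
  shows "mono_less n a b \<or> mono_less n b a"
proof -
  obtain v where v: "v \<in> sym_diff a b" "\<And>w. w \<in> sym_diff a b \<Longrightarrow> rank n v \<le> rank n w"
    using ex_has_least_nat[of "\<lambda>w. w \<in> sym_diff a b" _ "rank n"] assms by blast
  then have "\<forall>w\<in>vars n. rank n w < rank n v \<longrightarrow> (w \<in> a \<longleftrightarrow> w \<in> b)"
    by force
  with v(1) show ?thesis
    unfolding mono_less_def by blast
qed

lemma mono_less_greatest_exists:
  assumes "finite p" "p \<noteq> {}" "p \<subseteq> Pow (vars n)"
  shows "\<exists>m\<in>p. \<forall>m'\<in>p. m' \<noteq> m \<longrightarrow> mono_less n m' m"
  using assms
proof (induction p rule: finite_ne_induct)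
  case (singleton x)
  then show ?case
    by simp
next
  case (insert x p)
  then obtain m where m: "m \<in> p" "\<forall>m'\<in>p. m' \<noteq> m \<longrightarrow> mono_less n m' m"
    by blast
  show ?case
  proof (cases "mono_less n x m")
    case True
    with m show ?thesis
      by (intro bexI[of _ m]) auto
  next
    case False
    have "x \<noteq> m"
      using \<open>x \<notin> p\<close> m(1) by blast
    with False have "mono_less n m x"
      using mono_less_total[of x m n] by simp
    have "mono_less n m' x" if "m' \<in> p" for m'
    proof (cases "m' = m")
      case False
      with that m(2) have "mono_less n m' m"
        by simp
      moreover have "m \<subseteq> vars n" "x \<subseteq> vars n"
        using insert.prems m(1) by auto
      ultimately show ?thesis
        using mono_less_trans[of m n x m'] \<open>mono_less n m x\<close> by simp
    qed (use \<open>mono_less n m x\<close> in simp)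
    then show ?thesis
      by (intro bexI[of _ x]) auto
  qed
qed

lemma lm_mem:
  assumes "p \<in> bring n" "p \<noteq> bzero"
  shows "lm n p \<in> p"
proof -
  have "finite p" "p \<subseteq> Pow (vars n)" "p \<noteq> {}"
    using assms unfolding bring_def mmonos_def bzero_def by auto
  then obtain m where m: "m \<in> p" "\<forall>m'\<in>p. m' \<noteq> m \<longrightarrow> mono_less n m' m"
    using mono_less_greatest_exists by meson
  have unique: "m' = m" if "m' \<in> p" "\<forall>m''\<in>p. m'' \<noteq> m' \<longrightarrow> mono_less n m'' m'" for m'
  proof (rule ccontr)
    assume "m' \<noteq> m"
    then have "mono_less n m m'" "mono_less n m' m"
      using that m by auto
    moreover have "m' \<subseteq> vars n" "m \<subseteq> vars n"
      using that(1) m(1) \<open>p \<subseteq> Pow (vars n)\<close> by auto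
    ultimately show False
      using mono_less_trans[of m' n m m] mono_less_irrefl by blast
  qed
  have "\<exists>!m. m \<in> p \<and> (\<forall>m'\<in>p. m' \<noteq> m \<longrightarrow> mono_less n m' m)"
  proof (rule ex1I[of _ m])
    show "m \<in> p \<and> (\<forall>m'\<in>p. m' \<noteq> m \<longrightarrow> mono_less n m' m)"
      using m by blast
  qed (use unique in blast)
  then show ?thesis
    unfolding lm_def by (rule the1I2) simp
qed

lemma ideal_SM_supported_eq_zero:
  assumes "I \<subseteq> bring n" "p \<in> I" "p \<subseteq> SM n I"
  shows "p = bzero"
proof (rule ccontr)
  assume "p \<noteq> bzero"
  then have "lm n p \<in> SM n I"
    using lm_mem[of p n] assms by auto
  moreover have "{lm n p} \<in> ideal_gen n {{lm n f} | f. f \<in> I \<and> f \<noteq> bzero}"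
    by (rule ideal_gen.gen) (use assms(2) \<open>p \<noteq> bzero\<close> in blast)
  ultimately show False
    unfolding SM_def by simp
qed

lemma card_SM_le_card_variety:
  assumes "finite S" "S \<subseteq> bring n"
  shows "card (SM n (ideal_gen n S)) \<le> card (variety n S)"
proof -
  let ?SM = "SM n (ideal_gen n S)" and ?V = "variety n S"
  have SM_sub: "?SM \<subseteq> Pow (vars n)"
    unfolding SM_def mmonos_def by blast
  have V_sub: "?V \<subseteq> Pow (vars n)"
    unfolding variety_def by blast
  have "finite (vars n)"
    unfolding vars_def by simp
  then have fin: "finite ?SM" "finite ?V"
    using finite_subset[OF SM_sub] finite_subset[OF V_sub] by simp_all
  have "inj_on (\<lambda>p. {a \<in> ?V. beval p a}) (Pow ?SM)"
  proof (rule inj_onI)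
    fix p q assume pq: "p \<in> Pow ?SM" "q \<in> Pow ?SM" "{a \<in> ?V. beval p a} = {a \<in> ?V. beval q a}"
    then have "finite p" "finite q"
      using finite_subset[of p ?SM] finite_subset[of q ?SM] fin(1) by simp_all
    have "badd p q \<subseteq> ?SM"
      using pq(1,2) unfolding badd_def by auto
    then have "badd p q \<in> bring n"
      using SM_sub \<open>finite p\<close> \<open>finite q\<close> unfolding bring_def mmonos_def by auto
    moreover have "\<not> beval (badd p q) a" if "a \<in> ?V" for a
    proof -
      have "a \<in> {a \<in> ?V. beval p a} \<longleftrightarrow> a \<in> {a \<in> ?V. beval q a}"
        by (simp only: pq(3))
      with that show ?thesis
        using \<open>finite p\<close> \<open>finite q\<close> by (simp add: beval_badd)
    qed
    ultimately have "badd p q \<in> ideal_gen n S"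
      using boolean_nullstellensatz[OF assms] by blast
    with \<open>badd p q \<subseteq> ?SM\<close> have "badd p q = bzero"
      by (intro ideal_SM_supported_eq_zero[OF ideal_gen_subset_bring[OF assms(2)]])
    then show "p = q"
      unfolding badd_def bzero_def by auto
  qed
  then have "card (Pow ?SM) \<le> card (Pow ?V)"
    using fin by (intro card_inj_on_le) auto
  then show ?thesis
    using fin by (simp add: card_Pow)
qed

subsection \<open>The generators of \<open>I\<close> as Boolean functions\<close>

definition coords :: "nat \<Rightarrow> (nat \<Rightarrow> var) \<Rightarrow> var set \<Rightarrow> bool list" where
  "coords n Z a = phi n {i. Z i \<in> a}"

lemma phi_eq_iff: "phi n A = phi n B \<longleftrightarrow> (\<forall>i\<in>{1..n}. i \<in> A \<longleftrightarrow> i \<in> B)"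
proof -
  have "set [1..<Suc n] = {1..n}"
    by auto
  then show ?thesis
    unfolding phi_def map_eq_conv by simp
qed

lemma phi_nth: "i \<in> {1..n} \<Longrightarrow> phi n S ! (i - 1) \<longleftrightarrow> i \<in> S"
  unfolding phi_def by (subst nth_map) (auto simp del: upt_Suc)

lemma beval_xi:
  assumes "Z \<in> {X, Y, T}"
  shows "xi n Z S \<in> bring n" and "beval (xi n Z S) a \<longleftrightarrow> coords n Z a = phi n S"
proof -
  let ?f = "\<lambda>i. badd (badd bone (bvar (Z i))) (bconst (phi n S ! (i - 1)))"
  have "?f i \<in> bring n" if "i \<in> {1..n}" for i
    using assms that by auto
  moreover have "beval (?f i) a \<longleftrightarrow> (Z i \<in> a \<longleftrightarrow> i \<in> S)" if "i \<in> {1..n}" for i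
    using phi_nth[OF that] by (simp add: beval_badd)
  ultimately show "xi n Z S \<in> bring n" "beval (xi n Z S) a \<longleftrightarrow> coords n Z a = phi n S"
    unfolding xi_def coords_def phi_eq_iff using bring_beval_bprod_idx[of n ?f] by auto
qed

lemma beval_xi_fam:
  assumes "finite A" "Z \<in> {X, Y, T}"
  shows "xi_fam n Z A \<in> bring n" and "beval (xi_fam n Z A) a \<longleftrightarrow> coords n Z a \<notin> phi n ` A"
proof -
  let ?g = "\<lambda>S. bmult (badd (xi n Z S) bone)"
  have fold_inv: "y \<in> bring n \<and> (\<forall>a. beval y a \<longleftrightarrow> (\<forall>S\<in>B. coords n Z a \<noteq> phi n S))"
    if "fold_graph ?g bone B y" for B y
    using that
  proof induction
    case (insertI S B y)
    have "xi n Z S \<in> bring n"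
      using beval_xi(1)[OF assms(2)] .
    then have "finite (xi n Z S)" "finite y"
      using insertI.IH bring_finite by blast+
    with insertI \<open>xi n Z S \<in> bring n\<close> show ?case
      by (auto simp: beval_bmult beval_badd beval_xi(2)[OF assms(2)])
  qed simp
  obtain y where y: "fold_graph ?g bone A y"
    using finite_imp_fold_graph[OF assms(1), of ?g bone] by blast
  \<comment> \<open>\<open>Finite_Set.fold\<close> is only meaningful for commuting operations; here the fold is
    well defined because all its candidate values evaluate alike.\<close>
  have "(THE y. fold_graph ?g bone A y) = y"
  proof (rule the_equality)
    fix y' assume "fold_graph ?g bone A y'"
    then show "y' = y"
      using fold_inv[OF y] fold_inv[OF \<open>fold_graph ?g bone A y'\<close>] by (intro bpoly_eqI[of _ n]) auto
  qed (rule y)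
  then have "xi_fam n Z A = y"
    unfolding xi_fam_def bprod_set_def Finite_Set.fold_def using assms(1) by simp
  with fold_inv[OF y]
  show "xi_fam n Z A \<in> bring n" "beval (xi_fam n Z A) a \<longleftrightarrow> coords n Z a \<notin> phi n ` A"
    by blast+
qed

lemma beval_omega:
  shows "omega n \<in> bring n"
    and "beval (omega n) a \<longleftrightarrow> (\<forall>i\<in>{1..n}. X i \<in> a \<or> Y i \<in> a \<or> T i \<in> a)"
proof -
  show "omega n \<in> bring n"
    unfolding omega_def Let_def by (rule bring_beval_bprod_idx) simp
  show "beval (omega n) a \<longleftrightarrow> (\<forall>i\<in>{1..n}. X i \<in> a \<or> Y i \<in> a \<or> T i \<in> a)"
    unfolding omega_def Let_def by (subst bring_beval_bprod_idx(2)) (auto simp: beval_badd beval_bmult)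
qed

lemma coords_inj_on: "inj_on (\<lambda>a. (coords n X a, coords n Y a, coords n T a)) (Pow (vars n))"
proof (rule inj_onI)
  fix a b assume "a \<in> Pow (vars n)" "b \<in> Pow (vars n)"
    and "(coords n X a, coords n Y a, coords n T a) = (coords n X b, coords n Y b, coords n T b)"
  then have "\<forall>i\<in>{1..n}. (X i \<in> a \<longleftrightarrow> X i \<in> b) \<and> (Y i \<in> a \<longleftrightarrow> Y i \<in> b) \<and> (T i \<in> a \<longleftrightarrow> T i \<in> b)"
    by (simp add: coords_def phi_eq_iff)
  with \<open>a \<in> Pow (vars n)\<close> \<open>b \<in> Pow (vars n)\<close> show "a = b"
    unfolding vars_def by blast
qed

lemma variety_generators_point:
  assumes "finite F" "a \<in> variety n {xi_fam n X F, xi_fam n Y F, xi_fam n T F, omega n}"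
  shows "coords n X a \<in> phi n ` F" "coords n Y a \<in> phi n ` F" "coords n T a \<in> phi n ` F"
    and "\<exists>i\<in>{1..n}. X i \<notin> a \<and> Y i \<notin> a \<and> T i \<notin> a"
  using assms(2) beval_omega(2) beval_xi_fam(2)[OF assms(1)] unfolding variety_def by auto

lemma card_variety_lt:
  assumes "finite F" "F1 \<in> F" "F2 \<in> F" "F3 \<in> F" "{1..n} \<subseteq> F1 \<union> F2 \<union> F3"
  shows "card (variety n {xi_fam n X F, xi_fam n Y F, xi_fam n T F, omega n}) < card (phi n ` F) ^ 3"
proof -
  let ?V = "variety n {xi_fam n X F, xi_fam n Y F, xi_fam n T F, omega n}"
  let ?c = "\<lambda>a. (coords n X a, coords n Y a, coords n T a)"
  let ?PF = "phi n ` F" and ?t = "(phi n F1, phi n F2, phi n F3)"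
  have "?c a \<noteq> ?t" if a: "a \<in> ?V" for a
  proof -
    obtain i where "i \<in> {1..n}" "X i \<notin> a" "Y i \<notin> a" "T i \<notin> a"
      using variety_generators_point(4)[OF assms(1) a] by blast
    moreover from \<open>i \<in> {1..n}\<close> assms(5) have "i \<in> F1 \<or> i \<in> F2 \<or> i \<in> F3"
      by blast
    ultimately show ?thesis
      by (auto simp: coords_def phi_eq_iff)
  qed
  then have image: "?c ` ?V \<subseteq> ?PF \<times> ?PF \<times> ?PF - {?t}"
    using variety_generators_point(1-3)[OF assms(1)] by (intro image_subsetI) auto
  have "inj_on ?c ?V"
    using coords_inj_on by (rule inj_on_subset) (auto simp: variety_def)
  then have "card ?V = card (?c ` ?V)"
    by (simp add: card_image)
  also have "\<dots> \<le> card (?PF \<times> ?PF \<times> ?PF - {?t})"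
    using image assms(1) by (intro card_mono) simp_all
  also have "\<dots> < card (?PF \<times> ?PF \<times> ?PF)"
    using assms(1-4) by (intro card_Diff1_less) simp_all
  also have "\<dots> = card ?PF ^ 3"
    by (simp add: card_cartesian_product power3_eq_cube)
  finally show ?thesis .
qed

theorem mainTheorem5:
  fixes n :: nat and F :: "nat set set" and G :: "bpoly set"
  assumes "fail_prone n F"
    and "groebner_basis n (ideal_I n F) G"
    and "card (SM n (ideal_I n F)) = card (phi n ` F) ^ 3"
  shows "Q3 n F"
proof (rule ccontr)
  assume "\<not> Q3 n F"
  then obtain F1 F2 F3 where cover: "F1 \<in> F" "F2 \<in> F" "F3 \<in> F" "{1..n} \<subseteq> F1 \<union> F2 \<union> F3"
    unfolding Q3_def by blast
  have "finite F"
    using assms(1) unfolding fail_prone_def by (meson finite_Pow_iff finite_atLeastAtMost finite_subset)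
  let ?S = "{xi_fam n X F, xi_fam n Y F, xi_fam n T F, omega n}"
  have "?S \<subseteq> bring n"
    using beval_xi_fam(1)[OF \<open>finite F\<close>] beval_omega(1) by simp
  then have "card (SM n (ideal_I n F)) \<le> card (variety n ?S)"
    unfolding ideal_I_def by (intro card_SM_le_card_variety) auto
  also have "\<dots> < card (phi n ` F) ^ 3"
    using card_variety_lt[OF \<open>finite F\<close> cover] .
  finally show False
    using assms(3) by simp
qed

end
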